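(* Fix a finite extensive-form game with perfect recall and any sequence of joint normal-form plans $\pi^1,\dots,\pi^T\in\Pi$. Then the empirical frequency of play $\bar\mu^T$ satisfies \[ \delta(\bar\mu^T)=\max_{i\in\mathcal P}\ \max_{\sigma=(I,a)\in\Sigma_i\setminus\{\varnothing_i\}}\frac{R^T_\sigma}{T}. \] Consequently, $\bar\mu^T$ is an $\epsilon$-EFCE with $\epsilon=\max_{i\in\mathcal P}\max_{\sigma}R^T_\sigma/T$. That is, for every player $i$, every $\sigma=(I,a)$ and every $\hat\mu_i\in\Delta_{\Pi_i(I)}$, \[ \sum_{z\in Z(I,a)}q_{\bar\mu^T}(z)u_i(z)\ \ge\ \sum_{z\in Z(I)}p^\sigma_{\bar\mu^T,\hat\mu_i}(z)u_i(z)-\epsilon . \]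
   Context: Setting: a finite extensive-form game (game tree) with a set of players $\mathcal P$ and a chance player $c$ with fixed known action probabilities. $Z$ is the set of terminal nodes (leaves), $u_i:Z\to\mathbb R$ is player $i$'s payoff, and $p_c(z)$ is the product of chance probabilities along the root-to-$z$ path. $\mathcal I_i$ is the set of information sets (infosets) of player $i\in\mathcal P$; $A(I)$ is the action set at $I$. The game has perfect recall: all nodes of an infoset $I\in\mathcal I_i$ have the same ordered list of player-$i$ (infoset, action) pairs on their root paths. For $I,J\in\mathcal I_i$, write $I\preceq J$ if some path in the tree goes from a node of $I$ to a node of $J$ (with $I\preceq I$). A normal-form plan is $\pi_i\in\Pi_i=\prod_{I\in\mathcal I_i}A(I)$. Write $\Pi=\prod_{i\in\mathcal P}\Pi_i$ and $\Pi_{-i}=\prod_{j\ne i}\Pi_j$. The sequences of player $i$ are $\Sigma_i=\{(I,a):I\in\mathcal I_i,a\in A(I)\}\cup\{\varnothing_i\}$. $\Pi_i(I)$ is the set of plans $\pi_i$ with $\pi_i(J)=b$ for every player-$i$ pair $(J,b)$ on the root path to $I$. Also $\Pi_i((I,a))=\{\pi_i\in\Pi_i(I):\pi_i(I)=a\}$ and $\Pi_i(\varnothing_i)=\Pi_i$. For $z\in Z$, $\Pi_i(z)$ is the set of plans choosing, at every player-$i$ infoset visited on the root path to $z$, the action taken on that path. Then $\Pi(z)=\prod_i\Pi_i(z)$ and $\Pi_{-i}(z)=\prod_{j\neq i}\Pi_j(z)$. $Z(I)$ is the set of terminal nodes below nodes of $I$; $Z(I,a)\subseteq Z(I)$ consists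 of those whose path takes $a$ at $I$. $\mathcal C(I,a)$ is the set of player-$i$ infosets reachable from a node of $I$ by a path starting with $a$ and not passing through another player-$i$ infoset. Immediate utilities at round $t$: $u_i^t[I,a]=\sum_{z\in Z(I,a)\setminus\bigcup_{J\in\mathcal C(I,a)}Z(J)}\mathbb 1[\pi^t_{-i}\in\Pi_{-i}(z)]\,p_c(z)u_i(z)$. Values: $V_I^t(\pi_i)=u_i^t[I,\pi_i(I)]+\sum_{J\in\mathcal C(I,\pi_i(I))}V_J^t(\pi_i)$, defined recursively. Trigger regret for $\sigma=(I,a)$: $R^T_\sigma=\max_{\hat\pi_i\in\Pi_i(I)}\sum_{t=1}^T\mathbb 1[\pi_i^t\in\Pi_i(\sigma)]\big(V_I^t(\hat\pi_i)-V_I^t(\pi_i^t)\big)$. Empirical frequency: $\bar\mu^T(\pi)=|\{t\le T:\pi^t=\pi\}|/T$. For $\mu\in\Delta_\Pi$, $\sigma=(I,a)$, $\hat\mu_i\in\Delta_{\Pi_i(I)}$, $z\in Z(I)$: \[ p^\sigma_{\mu,\hat\mu_i}(z)=\Big(\sum_{\pi_i\in\Pi_i(\sigma),\,\pi_{-i}\in\Pi_{-i}(z)}\mu(\pi_i,\pi_{-i})\Big)\Big(\sum_{\hat\pi_i\in\Pi_i(z)}\hat\mu_i(\hat\pi_i)\Big)p_c(z), \] and $q_\mu(z)=\big(\sum_{\pi\in\Pi(z)}\mu(\pi)\big)p_c(z)$. Maximum deviation: \[ \delta(\mu)=\max_{i\in\mathcal P}\max_{\sigma=(I,a)}\Big\{\max_{\hat\mu_i\in\Delta_{\Pi_i(I)}}\sum_{z\in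 Z(I)}p^\sigma_{\mu,\hat\mu_i}(z)u_i(z)-\sum_{z\in Z(I,a)}q_\mu(z)u_i(z)\Big\}. \] An EFCE is a $\mu$ with $\delta(\mu)\le 0$; an $\epsilon$-EFCE is a $\mu$ with $\delta(\mu)\le\epsilon$. *)

theory Defs
  imports "HOL-Library.FuncSet" Complex_Main
begin

text \<open>A game: a finite prefix-closed set of histories (the tree; the root is the
empty history), a set of players, the player to move at each non-terminal history
(None = chance), chance probabilities, an infoset label for each node, and payoffs.\<close>

record ('p, 'a, 'i) efg =
  hists   :: "'a list set"
  players :: "'p set"
  turn    :: "'a list \<Rightarrow> 'p option"
  chance  :: "'a list \<Rightarrow> 'a \<Rightarrow> real"
  infoset :: "'a list \<Rightarrow> 'i"
  util    :: "'p \<Rightarrow> 'a list \<Rightarrow> real"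

definition acts :: "('p,'a,'i) efg \<Rightarrow> 'a list \<Rightarrow> 'a set" where
  "acts G h = {a. h @ [a] \<in> hists G}"

definition terminals :: "('p,'a,'i) efg \<Rightarrow> 'a list set" where
  "terminals G = {z \<in> hists G. acts G z = {}}"

definition pnode :: "('p,'a,'i) efg \<Rightarrow> 'p \<Rightarrow> 'a list \<Rightarrow> bool" where
  "pnode G i h \<longleftrightarrow> h \<in> hists G \<and> acts G h \<noteq> {} \<and> turn G h = Some i"

definition cnode :: "('p,'a,'i) efg \<Rightarrow> 'a list \<Rightarrow> bool" where
  "cnode G h \<longleftrightarrow> h \<in> hists G \<and> acts G h \<noteq> {} \<and> turn G h = None"

definition infosets :: "('p,'a,'i) efg \<Rightarrow> 'p \<Rightarrow> 'i set" where
  "infosets G i = infoset G ` {h. pnode G i h}"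

definition inodes :: "('p,'a,'i) efg \<Rightarrow> 'p \<Rightarrow> 'i \<Rightarrow> 'a list set" where
  "inodes G i I = {h. pnode G i h \<and> infoset G h = I}"

definition iacts :: "('p,'a,'i) efg \<Rightarrow> 'p \<Rightarrow> 'i \<Rightarrow> 'a set" where
  "iacts G i I = (\<Union>h\<in>inodes G i I. acts G h)"

definition seqs :: "('p,'a,'i) efg \<Rightarrow> 'p \<Rightarrow> 'a list \<Rightarrow> ('i \<times> 'a) list" where
  "seqs G i h = [(infoset G (take k h), h ! k). k \<leftarrow> [0..<length h], turn G (take k h) = Some i]"

definition wf_efg :: "('p,'a,'i) efg \<Rightarrow> bool" where
  "wf_efg G \<longleftrightarrow>
     finite (hists G) \<and> [] \<in> hists G \<and>
     (\<forall>h a. h @ [a] \<in> hists G \<longrightarrow> h \<in> hists G) \<and>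
     finite (players G) \<and>
     (\<forall>i h. pnode G i h \<longrightarrow> i \<in> players G) \<and>
     (\<forall>h. cnode G h \<longrightarrow> (\<forall>a\<in>acts G h. 0 \<le> chance G h a) \<and> (\<Sum>a\<in>acts G h. chance G h a) = 1) \<and>
     (\<forall>i j h h'. pnode G i h \<and> pnode G j h' \<and> infoset G h = infoset G h'
        \<longrightarrow> i = j \<and> acts G h = acts G h') \<and>
     (\<forall>i h h'. pnode G i h \<and> pnode G i h' \<and> infoset G h = infoset G h'
        \<longrightarrow> seqs G i h = seqs G i h')"

definition plans :: "('p,'a,'i) efg \<Rightarrow> 'p \<Rightarrow> ('i \<Rightarrow> 'a) set" where
  "plans G i = (\<Pi>\<^sub>E I\<in>infosets G i. iacts G i I)"

definition plans_z :: "('p,'a,'i) efg \<Rightarrow> 'p \<Rightarrow> 'a list \<Rightarrow> ('i \<Rightarrow> 'a) set" where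
  "plans_z G i z = {\<pi> \<in> plans G i. \<forall>(J, b)\<in>set (seqs G i z). \<pi> J = b}"

definition plans_I :: "('p,'a,'i) efg \<Rightarrow> 'p \<Rightarrow> 'i \<Rightarrow> ('i \<Rightarrow> 'a) set" where
  "plans_I G i I = {\<pi> \<in> plans G i. \<forall>h\<in>inodes G i I. \<forall>(J, b)\<in>set (seqs G i h). \<pi> J = b}"

definition plans_seq :: "('p,'a,'i) efg \<Rightarrow> 'p \<Rightarrow> 'i \<Rightarrow> 'a \<Rightarrow> ('i \<Rightarrow> 'a) set" where
  "plans_seq G i I a = {\<pi> \<in> plans_I G i I. \<pi> I = a}"

definition jplans :: "('p,'a,'i) efg \<Rightarrow> ('p \<Rightarrow> 'i \<Rightarrow> 'a) set" where
  "jplans G = (\<Pi>\<^sub>E i\<in>players G. plans G i)"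

definition jplans_z :: "('p,'a,'i) efg \<Rightarrow> 'a list \<Rightarrow> ('p \<Rightarrow> 'i \<Rightarrow> 'a) set" where
  "jplans_z G z = {\<pi> \<in> jplans G. \<forall>i\<in>players G. \<pi> i \<in> plans_z G i z}"

definition others_reach :: "('p,'a,'i) efg \<Rightarrow> 'p \<Rightarrow> ('p \<Rightarrow> 'i \<Rightarrow> 'a) \<Rightarrow> 'a list \<Rightarrow> bool" where
  "others_reach G i \<pi> z \<longleftrightarrow> (\<forall>j\<in>players G - {i}. \<pi> j \<in> plans_z G j z)"

definition pc :: "('p,'a,'i) efg \<Rightarrow> 'a list \<Rightarrow> real" where
  "pc G z = (\<Prod>k\<in>{k. k < length z \<and> turn G (take k z) = None}. chance G (take k z) (z ! k))"

definition below :: "('p,'a,'i) efg \<Rightarrow> 'p \<Rightarrow> 'i \<Rightarrow> 'a list set" where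
  "below G i I = {z \<in> terminals G. \<exists>h\<in>inodes G i I. \<exists>w. z = h @ w}"

definition below_act :: "('p,'a,'i) efg \<Rightarrow> 'p \<Rightarrow> 'i \<Rightarrow> 'a \<Rightarrow> 'a list set" where
  "below_act G i I a = {z \<in> terminals G. \<exists>h\<in>inodes G i I. \<exists>w. z = h @ a # w}"

definition children :: "('p,'a,'i) efg \<Rightarrow> 'p \<Rightarrow> 'i \<Rightarrow> 'a \<Rightarrow> 'i set" where
  "children G i I a = {J. \<exists>h\<in>inodes G i I. \<exists>w.
      pnode G i (h @ a # w) \<and> infoset G (h @ a # w) = J \<and>
      (\<forall>k<length w. \<not> pnode G i (h @ a # take k w))}"

definition imm :: "('p,'a,'i) efg \<Rightarrow> 'p \<Rightarrow> ('p \<Rightarrow> 'i \<Rightarrow> 'a) \<Rightarrow> 'i \<Rightarrow> 'a \<Rightarrow> real" where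
  "imm G i \<pi> I a =
     (\<Sum>z \<in> below_act G i I a - (\<Union>J\<in>children G i I a. below G i J).
        (if others_reach G i \<pi> z then pc G z * util G i z else 0))"

text \<open>Recursive values with fuel; the recursion depth is bounded by the tree depth.\<close>
fun Vf :: "nat \<Rightarrow> ('p,'a,'i) efg \<Rightarrow> 'p \<Rightarrow> ('p \<Rightarrow> 'i \<Rightarrow> 'a) \<Rightarrow> ('i \<Rightarrow> 'a) \<Rightarrow> 'i \<Rightarrow> real" where
  "Vf 0 G i \<pi> \<rho> I = 0"
| "Vf (Suc n) G i \<pi> \<rho> I = imm G i \<pi> I (\<rho> I) + (\<Sum>J\<in>children G i I (\<rho> I). Vf n G i \<pi> \<rho> J)"

definition V :: "('p,'a,'i) efg \<Rightarrow> 'p \<Rightarrow> ('p \<Rightarrow> 'i \<Rightarrow> 'a) \<Rightarrow> ('i \<Rightarrow> 'a) \<Rightarrow> 'i \<Rightarrow> real" where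
  "V G i \<pi> \<rho> I = Vf (card (hists G) + 1) G i \<pi> \<rho> I"

definition trig_regret :: "('p,'a,'i) efg \<Rightarrow> 'p \<Rightarrow> 'i \<Rightarrow> 'a \<Rightarrow> nat \<Rightarrow> (nat \<Rightarrow> 'p \<Rightarrow> 'i \<Rightarrow> 'a) \<Rightarrow> real" where
  "trig_regret G i I a T pis =
     Max ((\<lambda>\<rho>. \<Sum>t\<in>{1..T}. if pis t i \<in> plans_seq G i I a
                             then V G i (pis t) \<rho> I - V G i (pis t) (pis t i) I else 0)
          ` plans_I G i I)"

definition mubar :: "nat \<Rightarrow> (nat \<Rightarrow> 'p \<Rightarrow> 'i \<Rightarrow> 'a) \<Rightarrow> ('p \<Rightarrow> 'i \<Rightarrow> 'a) \<Rightarrow> real" where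
  "mubar T pis \<pi> = real (card {t \<in> {1..T}. pis t = \<pi>}) / real T"

definition dist_on :: "'x set \<Rightarrow> ('x \<Rightarrow> real) \<Rightarrow> bool" where
  "dist_on S m \<longleftrightarrow> (\<forall>x. 0 \<le> m x) \<and> (\<forall>x. x \<notin> S \<longrightarrow> m x = 0) \<and> (\<Sum>x\<in>S. m x) = 1"

definition p_dev :: "('p,'a,'i) efg \<Rightarrow> 'p \<Rightarrow> 'i \<Rightarrow> 'a \<Rightarrow> (('p \<Rightarrow> 'i \<Rightarrow> 'a) \<Rightarrow> real)
                     \<Rightarrow> (('i \<Rightarrow> 'a) \<Rightarrow> real) \<Rightarrow> 'a list \<Rightarrow> real" where
  "p_dev G i I a \<mu> \<mu>h z =
     (\<Sum>\<pi>\<in>{\<pi> \<in> jplans G. \<pi> i \<in> plans_seq G i I a \<and> others_reach G i \<pi> z}. \<mu> \<pi>)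
     * (\<Sum>\<rho>\<in>plans_z G i z. \<mu>h \<rho>) * pc G z"

definition q :: "('p,'a,'i) efg \<Rightarrow> (('p \<Rightarrow> 'i \<Rightarrow> 'a) \<Rightarrow> real) \<Rightarrow> 'a list \<Rightarrow> real" where
  "q G \<mu> z = (\<Sum>\<pi>\<in>jplans_z G z. \<mu> \<pi>) * pc G z"

text \<open>All triples (i, I, a) with \<sigma> = (I,a) \<in> \<Sigma>_i minus the empty sequence.\<close>
definition seqset :: "('p,'a,'i) efg \<Rightarrow> ('p \<times> 'i \<times> 'a) set" where
  "seqset G = {(i, I, a). i \<in> players G \<and> I \<in> infosets G i \<and> a \<in> iacts G i I}"

definition dev :: "('p,'a,'i) efg \<Rightarrow> (('p \<Rightarrow> 'i \<Rightarrow> 'a) \<Rightarrow> real) \<Rightarrow> 'p \<Rightarrow> 'i \<Rightarrow> 'a \<Rightarrow> real" where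
  "dev G \<mu> i I a =
     Sup {(\<Sum>z\<in>below G i I. p_dev G i I a \<mu> \<mu>h z * util G i z) | \<mu>h. dist_on (plans_I G i I) \<mu>h}
     - (\<Sum>z\<in>below_act G i I a. q G \<mu> z * util G i z)"

definition delta :: "('p,'a,'i) efg \<Rightarrow> (('p \<Rightarrow> 'i \<Rightarrow> 'a) \<Rightarrow> real) \<Rightarrow> real" where
  "delta G \<mu> = Max ((\<lambda>(i, I, a). dev G \<mu> i I a) ` seqset G)"

definition efce_eps :: "('p,'a,'i) efg \<Rightarrow> (('p \<Rightarrow> 'i \<Rightarrow> 'a) \<Rightarrow> real) \<Rightarrow> real \<Rightarrow> bool" where
  "efce_eps G \<mu> \<epsilon> \<longleftrightarrow> delta G \<mu> \<le> \<epsilon>"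

end

theory Submission
  imports Defs
begin

text \<open>Fix a trigger sigma = (I, a) of player i. Under perfect recall the recursion defining
V_I^t(rho) merely splits the terminals Z(I, rho(I)) along the disjoint subtrees of the child
infosets, so for rho in Pi_i(I) the value V_I^t(rho) is the total payoff pc(z) u_i(z) of the
terminals z in Z(I) reached by both rho and pi^t_{-i}. Expanding the empirical frequency,
the deviation value of a mixed deviation mu_i is the mu_i-average over rho of
(1/T) sum_t [pi^t_i in Pi_i(sigma)] V_I^t(rho), and the on-path value is the same expression
with rho replaced by pi^t_i. Being linear in mu_i, the deviation value is maximised at a pure
plan, where the gain is exactly R^T_sigma / T.\<close>

lemma seqs_snoc:
  "seqs G i (h @ [b]) = seqs G i h @ (if turn G h = Some i then [(infoset G h, b)] else [])"
proof -
  have "k \<in> set [0..<length h] \<Longrightarrow> take k (h @ [b]) = take k h \<and> (h @ [b]) ! k = h ! k" for k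
    by (simp add: nth_append)
  then have "map (\<lambda>k. if turn G (take k (h @ [b])) = Some i
                        then [(infoset G (take k (h @ [b])), (h @ [b]) ! k)] else []) [0..<length h]
      = map (\<lambda>k. if turn G (take k h) = Some i then [(infoset G (take k h), h ! k)] else []) [0..<length h]"
    by (intro map_cong) simp_all
  moreover have "take (length h) (h @ [b]) = h" and "(h @ [b]) ! length h = b"
    by simp_all
  ultimately show ?thesis
    unfolding seqs_def by (simp del: take_append map_eq_conv)
qed

lemma mem_seqs_iff:
  "(J, b) \<in> set (seqs G i z) \<longleftrightarrow> (\<exists>p w. z = p @ b # w \<and> turn G p = Some i \<and> infoset G p = J)"
proof (induction z rule: rev_induct)
  case Nil
  then show ?case by (simp add: seqs_def)
next
  case (snoc c z)
  have "z @ [c] = p @ b # w \<longleftrightarrow> (w = [] \<and> p = z \<and> b = c) \<or> (\<exists>w'. w = w' @ [c] \<and> z = p @ b # w')"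
    for p w by (cases w rule: rev_exhaust) auto
  with snoc show ?case
    unfolding seqs_snoc by auto
qed

lemma seqs_append: "\<exists>r. seqs G i (h @ w) = seqs G i h @ r"
proof (induction w rule: rev_induct)
  case (snoc x xs)
  then show ?case
    using seqs_snoc[of G i "h @ xs" x] by (metis append_assoc)
qed simp

lemma seqs_append_Cons:
  assumes "turn G h = Some i"
  shows "\<exists>r. seqs G i (h @ b # w) = seqs G i h @ (infoset G h, b) # r"
  using seqs_append[of G i "h @ [b]" w] seqs_snoc[of G i h b] assms by auto

lemma length_seqs_two_moves:
  assumes "turn G h = Some i" and "turn G (h @ a # w1) = Some i"
  shows "length (seqs G i h) + 2 \<le> length (seqs G i (h @ a # w1 @ c # w2))"
proof -
  obtain r1 where "seqs G i (h @ a # w1) = seqs G i h @ (infoset G h, a) # r1"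
    using seqs_append_Cons[OF assms(1)] by blast
  moreover obtain r2 where "seqs G i ((h @ a # w1) @ c # w2)
      = seqs G i (h @ a # w1) @ (infoset G (h @ a # w1), c) # r2"
    using seqs_append_Cons[OF assms(2)] by blast
  ultimately show ?thesis by simp
qed

lemma below_obtain:
  assumes "z \<in> below G i I"
  obtains h b w where "h \<in> inodes G i I" and "z = h @ b # w"
proof -
  obtain h w where hw: "z \<in> terminals G" "h \<in> inodes G i I" "z = h @ w"
    using assms unfolding below_def by blast
  have "w \<noteq> []"
    using hw unfolding inodes_def pnode_def terminals_def by auto
  with hw that show ?thesis by (metis neq_Nil_conv)
qed

lemma plans_z_below_act:
  assumes "\<rho> \<in> plans_z G i z" and "z \<in> below G i I"
  shows "z \<in> below_act G i I (\<rho> I)"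
proof -
  obtain h b w where hbw: "h \<in> inodes G i I" "z = h @ b # w"
    using below_obtain[OF assms(2)] .
  then have "(I, b) \<in> set (seqs G i z)"
    unfolding mem_seqs_iff inodes_def pnode_def by blast
  then have "\<rho> I = b"
    using assms(1) unfolding plans_z_def by fastforce
  with assms(2) hbw show ?thesis
    unfolding below_def below_act_def by blast
qed

lemma sum_mubar:
  assumes "finite P" and "\<forall>t\<in>{1..T}. pis t \<in> P"
  shows "(\<Sum>\<pi>\<in>{\<pi> \<in> P. Q \<pi>}. mubar T pis \<pi>) = (\<Sum>t\<in>{1..T}. if Q (pis t) then 1 else 0) / real T"
proof -
  have "real (card {t \<in> {1..T}. pis t = \<pi>}) = (\<Sum>t\<in>{1..T}. if pis t = \<pi> then 1 else 0)" for \<pi>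
    by (simp add: sum.inter_filter[symmetric])
  then have "(\<Sum>\<pi>\<in>{\<pi> \<in> P. Q \<pi>}. mubar T pis \<pi>)
      = (\<Sum>\<pi>\<in>{\<pi> \<in> P. Q \<pi>}. \<Sum>t\<in>{1..T}. if pis t = \<pi> then 1 else 0) / real T"
    unfolding mubar_def by (simp add: sum_divide_distrib)
  also have "\<dots> = (\<Sum>t\<in>{1..T}. \<Sum>\<pi>\<in>{\<pi> \<in> P. Q \<pi>}. if pis t = \<pi> then 1 else 0) / real T"
    by (subst sum.swap) (rule refl)
  also have "\<dots> = (\<Sum>t\<in>{1..T}. if Q (pis t) then 1 else 0) / real T"
    using assms by (simp add: sum.delta)
  finally show ?thesis .
qed

lemma dist_on_sum_le_Max:
  fixes F :: "'x \<Rightarrow> real"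
  assumes "finite S" and "dist_on S m"
  shows "(\<Sum>x\<in>S. m x * F x) \<le> Max (F ` S)"
proof -
  have "(\<Sum>x\<in>S. m x * F x) \<le> (\<Sum>x\<in>S. m x * Max (F ` S))"
    using assms by (intro sum_mono mult_left_mono) (auto simp: dist_on_def)
  also have "\<dots> = Max (F ` S)"
    using assms(2) by (simp add: sum_distrib_right[symmetric] dist_on_def)
  finally show ?thesis .
qed

lemma Sup_dist_on_sum:
  fixes F :: "'x \<Rightarrow> real"
  assumes "finite S" and "S \<noteq> {}"
  shows "Sup {(\<Sum>x\<in>S. m x * F x) | m. dist_on S m} = Max (F ` S)"
proof (rule cSup_eq_maximum)
  have "Max (F ` S) \<in> F ` S"
    using assms by simp
  then obtain x0 where x0: "x0 \<in> S" "F x0 = Max (F ` S)"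
    by (metis imageE)
  define m0 where "m0 x = (if x = x0 then 1 else 0 :: real)" for x
  have "dist_on S m0"
    unfolding dist_on_def m0_def using x0 assms by (simp add: sum.delta')
  moreover have "(\<Sum>x\<in>S. m0 x * F x) = (\<Sum>x\<in>S. if x = x0 then F x else 0)"
    by (rule sum.cong) (simp_all add: m0_def)
  moreover have "\<dots> = Max (F ` S)"
    using x0 assms by (simp add: sum.delta')
  ultimately show "Max (F ` S) \<in> {(\<Sum>x\<in>S. m x * F x) | m. dist_on S m}"
    by force
qed (use dist_on_sum_le_Max[OF assms(1)] in blast)

section \<open>Well-formed games and perfect recall\<close>

locale wf_game =
  fixes G :: "('p, 'a, 'i) efg"
  assumes wf: "wf_efg G"
begin

lemma hists_prefixD: "h @ w \<in> hists G \<Longrightarrow> h \<in> hists G"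
proof (induction w rule: rev_induct)
  case (snoc x xs)
  then show ?case
    using wf unfolding wf_efg_def by (metis append_assoc)
qed simp

lemma length_lt_card_hists:
  assumes "h \<in> hists G"
  shows "length h < card (hists G)"
proof -
  have sub: "(\<lambda>k. take k h) ` {0..length h} \<subseteq> hists G"
    using hists_prefixD[of "take k h" "drop k h" for k] assms by auto
  have "inj_on (\<lambda>k. take k h) {0..length h}"
    by (rule inj_onI) (metis atLeastAtMost_iff length_take min.absorb2)
  then have "card ((\<lambda>k. take k h) ` {0..length h}) = Suc (length h)"
    by (simp add: card_image)
  moreover have "card ((\<lambda>k. take k h) ` {0..length h}) \<le> card (hists G)"
    using wf sub by (intro card_mono) (simp_all add: wf_efg_def)
  ultimately show ?thesis by simp
qed

lemma pnode_prefixI: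
  assumes "h @ b # w \<in> hists G" and "turn G h = Some i"
  shows "pnode G i h"
proof -
  have "h @ [b] \<in> hists G"
    using assms(1) hists_prefixD[of "h @ [b]" w] by simp
  then show ?thesis
    using hists_prefixD assms(2) unfolding pnode_def acts_def by blast
qed

lemma finite_acts: "finite (acts G h)"
proof -
  have "acts G h = (\<lambda>a. h @ [a]) -` hists G"
    unfolding acts_def by auto
  then show ?thesis
    using wf by (auto intro: finite_vimageI injI simp: wf_efg_def)
qed

lemma finite_inodes: "finite (inodes G i I)"
  using wf by (auto intro: finite_subset simp: inodes_def pnode_def wf_efg_def)

lemma finite_iacts: "finite (iacts G i I)"
  unfolding iacts_def by (intro finite_UN_I finite_inodes finite_acts)

lemma finite_infosets: "finite (infosets G i)"
  using wf unfolding infosets_def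
  by (intro finite_imageI) (auto intro: finite_subset simp: pnode_def wf_efg_def)

lemma finite_plans: "finite (plans G i)"
  unfolding plans_def by (intro finite_PiE finite_infosets finite_iacts)

lemma finite_jplans: "finite (jplans G)"
  using wf unfolding jplans_def wf_efg_def by (intro finite_PiE finite_plans) auto

lemma finite_plans_I: "finite (plans_I G i I)"
  using finite_plans by (rule finite_subset[rotated]) (auto simp: plans_I_def)

lemma finite_children: "finite (children G i I a)"
  using wf unfolding children_def wf_efg_def
  by (auto intro: finite_subset[OF _ finite_imageI] simp: pnode_def)

lemma finite_below: "finite (below G i I)"
  using wf unfolding below_def terminals_def wf_efg_def by auto

lemma finite_below_act: "finite (below_act G i I a)"
  using wf unfolding below_act_def terminals_def wf_efg_def by auto

lemma finite_seqset: "finite (seqset G)"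
proof (rule finite_subset)
  show "seqset G \<subseteq> Sigma (players G) (\<lambda>i. Sigma (infosets G i) (iacts G i))"
    unfolding seqset_def by auto
  show "finite (Sigma (players G) (\<lambda>i. Sigma (infosets G i) (iacts G i)))"
    using wf by (intro finite_SigmaI finite_infosets finite_iacts) (simp add: wf_efg_def)
qed

lemma inodes_seqs_eq:
  assumes "h \<in> inodes G i I" and "h' \<in> inodes G i I"
  shows "seqs G i h = seqs G i h'"
proof -
  have "\<forall>i h h'. pnode G i h \<and> pnode G i h' \<and> infoset G h = infoset G h'
          \<longrightarrow> seqs G i h = seqs G i h'"
    using wf unfolding wf_efg_def by blast
  with assms show ?thesis
    unfolding inodes_def by auto
qed

lemma inodes_not_extended:
  assumes "h \<in> inodes G i I"
  shows "h @ b # w \<notin> inodes G i I"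
proof
  assume "h @ b # w \<in> inodes G i I"
  moreover obtain r where "seqs G i (h @ b # w) = seqs G i h @ (infoset G h, b) # r"
    using assms seqs_append_Cons[of G h i b w] unfolding inodes_def pnode_def by auto
  ultimately show False
    using inodes_seqs_eq[OF assms] by (metis append_self_conv list.distinct(1))
qed

lemma inodes_append_eq:
  assumes "h \<in> inodes G i I" and "h' \<in> inodes G i I" and "h @ w = h' @ w'"
  shows "h = h'"
proof -
  obtain us where "(h = h' @ us \<and> us @ w = w') \<or> (h @ us = h' \<and> w = us @ w')"
    using assms(3) append_eq_append_conv2 by metis
  with assms(1,2) show ?thesis
    by (cases us) (auto dest: inodes_not_extended)
qed

lemma mem_seqs_inodes:
  assumes "(J, b) \<in> set (seqs G i z)" and "z \<in> hists G"
  obtains p w where "z = p @ b # w" and "p \<in> inodes G i J"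
proof -
  obtain p w where pw: "z = p @ b # w" "turn G p = Some i" "infoset G p = J"
    using assms(1) unfolding mem_seqs_iff by blast
  with assms(2) have "pnode G i p"
    by (auto intro: pnode_prefixI)
  with pw that show ?thesis
    unfolding inodes_def by blast
qed

lemma mem_seqs_iacts:
  assumes "(J, b) \<in> set (seqs G i h)" and "h \<in> hists G"
  shows "J \<in> infosets G i" and "b \<in> iacts G i J"
proof -
  obtain p w where pw: "h = p @ b # w" "p \<in> inodes G i J"
    using mem_seqs_inodes[OF assms] .
  then show "J \<in> infosets G i"
    unfolding inodes_def infosets_def by blast
  have "b \<in> acts G p"
    using hists_prefixD[of "p @ [b]" w] pw(1) assms(2) unfolding acts_def by simp
  with pw(2) show "b \<in> iacts G i J"
    unfolding iacts_def by blast
qed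

lemma mem_seqs_unique:
  assumes "(J, b) \<in> set (seqs G i h)" and "(J, b') \<in> set (seqs G i h)" and "h \<in> hists G"
  shows "b = b'"
proof -
  obtain p w where "h = p @ b # w" "p \<in> inodes G i J"
    using mem_seqs_inodes[OF assms(1,3)] .
  moreover obtain p' w' where "h = p' @ b' # w'" "p' \<in> inodes G i J"
    using mem_seqs_inodes[OF assms(2,3)] .
  ultimately show ?thesis
    using inodes_append_eq[of p i J p' "b # w" "b' # w'"] by auto
qed

text \<open>The witness follows the unique root path of I and is arbitrary elsewhere.\<close>

lemma plans_I_nonempty:
  assumes "I \<in> infosets G i"
  shows "plans_I G i I \<noteq> {}"
proof -
  obtain h0 where h0: "h0 \<in> inodes G i I"
    using assms unfolding infosets_def inodes_def by blast
  then have h0h: "h0 \<in> hists G"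
    unfolding inodes_def pnode_def by blast
  define \<rho> where "\<rho> J = (if J \<in> infosets G i
      then (if \<exists>b. (J, b) \<in> set (seqs G i h0) then (SOME b. (J, b) \<in> set (seqs G i h0))
            else (SOME b. b \<in> iacts G i J))
      else undefined)" for J
  have on_path: "\<rho> J = b" if Jb: "(J, b) \<in> set (seqs G i h0)" for J b
  proof -
    have "(J, \<rho> J) \<in> set (seqs G i h0)"
      unfolding \<rho>_def using Jb mem_seqs_iacts(1)[OF Jb h0h] by (auto intro: someI)
    then show ?thesis
      using mem_seqs_unique[OF _ Jb h0h] by blast
  qed
  have "\<rho> J \<in> iacts G i J" if J: "J \<in> infosets G i" for J
  proof (cases "\<exists>b. (J, b) \<in> set (seqs G i h0)")
    case True
    then show ?thesis
      using on_path mem_seqs_iacts(2)[OF _ h0h] by blast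
  next
    case False
    have "iacts G i J \<noteq> {}"
      using J unfolding infosets_def inodes_def iacts_def pnode_def by blast
    with J False show ?thesis
      unfolding \<rho>_def by (simp add: some_in_eq)
  qed
  then have "\<rho> \<in> plans G i"
    unfolding plans_def PiE_iff by (auto simp: \<rho>_def extensional_def)
  moreover have "\<rho> J = b" if "h \<in> inodes G i I" "(J, b) \<in> set (seqs G i h)" for h J b
    using that on_path inodes_seqs_eq[OF _ h0] by metis
  ultimately show ?thesis
    unfolding plans_I_def by blast
qed

lemma seqs_first_move:
  assumes "turn G h = Some i" and "h @ a # w \<in> hists G"
    and "\<forall>k<length w. \<not> pnode G i (h @ a # take k w)"
  shows "seqs G i (h @ a # w) = seqs G i h @ [(infoset G h, a)]"
  using assms(2,3)
proof (induction w rule: rev_induct)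
  case Nil
  then show ?case
    using seqs_snoc[of G i h a] assms(1) by simp
next
  case (snoc c w)
  have "h @ a # w \<in> hists G"
    using hists_prefixD[of "h @ a # w" "[c]"] snoc.prems(1) by simp
  moreover have "\<forall>k<length w. \<not> pnode G i (h @ a # take k w)"
  proof (intro allI impI)
    fix k assume "k < length w"
    then show "\<not> pnode G i (h @ a # take k w)"
      using snoc.prems(2)[rule_format, of k] by simp
  qed
  moreover have "turn G (h @ a # w) \<noteq> Some i"
  proof
    assume "turn G (h @ a # w) = Some i"
    then have "pnode G i (h @ a # w)"
      using pnode_prefixI[of "h @ a # w" c "[]" i] snoc.prems(1) by simp
    then show False
      using snoc.prems(2)[rule_format, of "length w"] by simp
  qed
  ultimately show ?case
    using seqs_snoc[of G i "h @ a # w" c] snoc.IH by simp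
qed

lemma children_inodes:
  assumes "J \<in> children G i I a" and "g \<in> inodes G i J"
  obtains h w where "h \<in> inodes G i I" and "g = h @ a # w"
    and "seqs G i g = seqs G i h @ [(I, a)]"
proof -
  obtain h0 w0 where hw: "h0 \<in> inodes G i I" "pnode G i (h0 @ a # w0)"
      "infoset G (h0 @ a # w0) = J" "\<forall>k<length w0. \<not> pnode G i (h0 @ a # take k w0)"
    using assms(1) unfolding children_def by blast
  then have "seqs G i (h0 @ a # w0) = seqs G i h0 @ [(I, a)]"
    using seqs_first_move[of h0 i a w0] unfolding inodes_def pnode_def by auto
  moreover have "h0 @ a # w0 \<in> inodes G i J"
    using hw(2,3) unfolding inodes_def by simp
  ultimately have sg: "seqs G i g = seqs G i h0 @ [(I, a)]"
    using inodes_seqs_eq[OF assms(2)] by simp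
  moreover have "g \<in> hists G"
    using assms(2) unfolding inodes_def pnode_def by blast
  ultimately obtain p w where "g = p @ a # w" "p \<in> inodes G i I"
    using mem_seqs_inodes[of I a i g] by auto
  with that sg inodes_seqs_eq[OF _ hw(1)] show ?thesis by metis
qed

lemma children_infosets: "J \<in> children G i I a \<Longrightarrow> J \<in> infosets G i"
  unfolding children_def infosets_def by blast

lemma below_children_subset:
  assumes "J \<in> children G i I a"
  shows "below G i J \<subseteq> below_act G i I a"
proof
  fix z assume "z \<in> below G i J"
  then obtain g v where gv: "z \<in> terminals G" "g \<in> inodes G i J" "z = g @ v"
    unfolding below_def by blast
  obtain h w where "h \<in> inodes G i I" "g = h @ a # w"
    using children_inodes[OF assms gv(2)] .
  with gv show "z \<in> below_act G i I a"
    unfolding below_act_def by auto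
qed

text \<open>Two nodes of child infosets on one path would give that path two moves of player i
after (I, a), contradicting the sequence (I, a) that both of them end with.\<close>

lemma below_children_disjoint:
  assumes "J \<in> children G i I a" and "J' \<in> children G i I a"
    and "z \<in> below G i J" and "z \<in> below G i J'"
  shows "J = J'"
proof -
  obtain g v g' v' where gv: "g \<in> inodes G i J" "z = g @ v" "g' \<in> inodes G i J'" "z = g' @ v'"
    using assms(3,4) unfolding below_def by blast
  obtain h w where hw: "h \<in> inodes G i I" "g = h @ a # w" "seqs G i g = seqs G i h @ [(I, a)]"
    using children_inodes[OF assms(1) gv(1)] .
  obtain h' w' where hw': "h' \<in> inodes G i I" "g' = h' @ a # w'"
      "seqs G i g' = seqs G i h' @ [(I, a)]"
    using children_inodes[OF assms(2) gv(3)] .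
  have "h = h'"
    using inodes_append_eq[OF hw(1) hw'(1), of "a # w @ v" "a # w' @ v'"] gv hw hw' by simp
  have turns: "turn G h = Some i" "turn G g = Some i" "turn G g' = Some i"
    using hw(1) gv(1,3) unfolding inodes_def pnode_def by auto
  obtain us where us: "(g = g' @ us \<and> us @ v = v') \<or> (g @ us = g' \<and> v = us @ v')"
    using gv(2,4) append_eq_append_conv2 by metis
  show ?thesis
  proof (cases us)
    case Nil
    then show ?thesis
      using us gv(1,3) unfolding inodes_def by auto
  next
    case (Cons c u)
    show ?thesis
    proof (cases "g = g' @ us")
      case True
      then have "length (seqs G i h) + 2 \<le> length (seqs G i g)"
        using length_seqs_two_moves[of G h i a w' c u] turns hw'(2) Cons \<open>h = h'\<close> by simp
      then show ?thesis using hw(3) by simp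
    next
      case False
      then have "length (seqs G i h) + 2 \<le> length (seqs G i g')"
        using length_seqs_two_moves[of G h i a w c u] turns us hw(2) Cons by simp
      then show ?thesis using hw'(3) \<open>h = h'\<close> by simp
    qed
  qed
qed

lemma plans_I_children:
  assumes "\<rho> \<in> plans_I G i I" and "J \<in> children G i I (\<rho> I)"
  shows "\<rho> \<in> plans_I G i J"
proof -
  have "\<rho> K = b" if g: "g \<in> inodes G i J" and Kb: "(K, b) \<in> set (seqs G i g)" for g K b
  proof -
    obtain h w where "h \<in> inodes G i I" "seqs G i g = seqs G i h @ [(I, \<rho> I)]"
      using children_inodes[OF assms(2) g] .
    with assms(1) Kb show ?thesis
      unfolding plans_I_def by fastforce
  qed
  with assms(1) show ?thesis
    unfolding plans_I_def by blast
qed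

lemma plans_z_plans_seq:
  assumes "\<pi> \<in> plans_z G i z" and "z \<in> below_act G i I a"
  shows "\<pi> \<in> plans_seq G i I a"
proof -
  obtain h w where hw: "h \<in> inodes G i I" "z = h @ a # w"
    using assms(2) unfolding below_act_def by blast
  then obtain r where r: "seqs G i z = seqs G i h @ (I, a) # r"
    using seqs_append_Cons[of G h i a w] unfolding inodes_def pnode_def by auto
  have "\<pi> J = b" if h': "h' \<in> inodes G i I" and Jb: "(J, b) \<in> set (seqs G i h')" for h' J b
  proof -
    have "(J, b) \<in> set (seqs G i z)"
      using Jb r inodes_seqs_eq[OF h' hw(1)] by simp
    then show ?thesis
      using assms(1) unfolding plans_z_def by fastforce
  qed
  moreover have "\<pi> I = a"
    using assms(1) r unfolding plans_z_def by auto
  ultimately show ?thesis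
    using assms(1) unfolding plans_seq_def plans_I_def plans_z_def by blast
qed

lemma no_move_outside_children:
  assumes "h \<in> inodes G i I" and "z = h @ a # w" and "z \<in> terminals G"
    and "z \<notin> (\<Union>J\<in>children G i I a. below G i J)"
    and "k < length w"
  shows "turn G (h @ a # take k w) \<noteq> Some i"
proof
  assume "turn G (h @ a # take k w) = Some i"
  then have ex: "\<exists>k. k < length w \<and> turn G (h @ a # take k w) = Some i"
    using assms(5) by blast
  define k0 where "k0 = (LEAST k. k < length w \<and> turn G (h @ a # take k w) = Some i)"
  have k0: "k0 < length w" "turn G (h @ a # take k0 w) = Some i"
    using LeastI_ex[OF ex] unfolding k0_def by auto
  have before: "turn G (h @ a # take k w) \<noteq> Some i" if "k < k0" for k
    using not_less_Least[of k "\<lambda>k. k < length w \<and> turn G (h @ a # take k w) = Some i"] that k0(1)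
    unfolding k0_def by auto
  define g where "g = h @ a # take k0 w"
  have zg: "z = g @ (w ! k0) # drop (Suc k0) w"
    using assms(2) k0(1) unfolding g_def by (simp add: id_take_nth_drop[symmetric])
  have pg: "pnode G i g"
    using pnode_prefixI[of g "w ! k0" "drop (Suc k0) w" i] zg assms(3) k0(2)
    unfolding g_def terminals_def by simp
  have "infoset G g \<in> children G i I a"
    unfolding children_def
  proof (intro CollectI bexI exI conjI allI impI)
    show "pnode G i (h @ a # take k0 w)"
      using pg unfolding g_def .
    fix k assume "k < length (take k0 w)"
    then show "\<not> pnode G i (h @ a # take k (take k0 w))"
      using before[of k] unfolding pnode_def by simp
  qed (simp_all add: g_def assms(1))
  moreover have "z \<in> below G i (infoset G g)"
    using assms(3) zg pg unfolding below_def inodes_def by blast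
  ultimately show False
    using assms(4) by blast
qed

lemma plans_z_outside_children:
  assumes "\<rho> \<in> plans_I G i I" and "z \<in> below_act G i I (\<rho> I)"
    and "z \<notin> (\<Union>J\<in>children G i I (\<rho> I). below G i J)"
  shows "\<rho> \<in> plans_z G i z"
proof -
  obtain h w where hw: "z \<in> terminals G" "h \<in> inodes G i I" "z = h @ \<rho> I # w"
    using assms(2) unfolding below_act_def by blast
  have "\<rho> K = b" if Kb: "(K, b) \<in> set (seqs G i z)" for K b
  proof -
    obtain p v where pv: "z = p @ b # v" "turn G p = Some i" "infoset G p = K"
      using Kb unfolding mem_seqs_iff by blast
    obtain us where us: "(h = p @ us \<and> us @ \<rho> I # w = b # v) \<or> (h @ us = p \<and> \<rho> I # w = us @ b # v)"
      using hw(3) pv(1) append_eq_append_conv2 by metis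
    show ?thesis
    proof (cases us)
      case Nil
      then show ?thesis
        using us pv(3) hw(2) unfolding inodes_def by auto
    next
      case (Cons c u)
      show ?thesis
      proof (cases "h = p @ us")
        case True
        then have "(K, b) \<in> set (seqs G i h)"
          unfolding mem_seqs_iff using pv us Cons by auto
        then show ?thesis
          using assms(1) hw(2) unfolding plans_I_def by fastforce
      next
        case False
        then have "p = h @ \<rho> I # take (length u) w" "length u < length w"
          using us Cons by auto
        then show ?thesis
          using no_move_outside_children[OF hw(2,3,1) assms(3)] pv(2) by blast
      qed
    qed
  qed
  with assms(1) show ?thesis
    unfolding plans_z_def plans_I_def by blast
qed

end

section \<open>Values as payoffs of reached terminals\<close>

definition reach_value ::
    "('p, 'a, 'i) efg \<Rightarrow> 'p \<Rightarrow> ('p \<Rightarrow> 'i \<Rightarrow> 'a) \<Rightarrow> ('i \<Rightarrow> 'a) \<Rightarrow> 'i \<Rightarrow> real" where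
  "reach_value G i \<pi> \<rho> I =
     (\<Sum>z\<in>below G i I. if others_reach G i \<pi> z \<and> \<rho> \<in> plans_z G i z then pc G z * util G i z else 0)"

context wf_game
begin

lemma reach_value_split:
  assumes "\<rho> \<in> plans_I G i I"
  shows "reach_value G i \<pi> \<rho> I
       = imm G i \<pi> I (\<rho> I) + (\<Sum>J\<in>children G i I (\<rho> I). reach_value G i \<pi> \<rho> J)"
proof -
  define a where "a = \<rho> I"
  define f where "f z = (if others_reach G i \<pi> z \<and> \<rho> \<in> plans_z G i z
                         then pc G z * util G i z else 0)" for z
  define U where "U = (\<Union>J\<in>children G i I a. below G i J)"
  have "reach_value G i \<pi> \<rho> I = sum f (below_act G i I a)"
    unfolding reach_value_def f_def[symmetric]
  proof (rule sum.mono_neutral_right[OF finite_below])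
    show "below_act G i I a \<subseteq> below G i I"
      unfolding below_act_def below_def by blast
    show "\<forall>z\<in>below G i I - below_act G i I a. f z = 0"
      using plans_z_below_act unfolding f_def a_def by fastforce
  qed
  also have "\<dots> = sum f (below_act G i I a - U) + sum f U"
    unfolding U_def by (intro sum.subset_diff finite_below_act UN_least) (rule below_children_subset)
  also have "sum f (below_act G i I a - U) = imm G i \<pi> I a"
    unfolding imm_def U_def
    using plans_z_outside_children[OF assms] by (intro sum.cong) (auto simp: f_def a_def)
  also have "sum f U = (\<Sum>J\<in>children G i I a. reach_value G i \<pi> \<rho> J)"
    unfolding U_def reach_value_def f_def[symmetric]
    by (rule sum.UNION_disjoint[OF finite_children])
      (simp add: finite_below, use below_children_disjoint in blast)
  finally show ?thesis
    unfolding a_def .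
qed

lemma Vf_eq_reach_value:
  assumes "I \<in> infosets G i" and "\<rho> \<in> plans_I G i I"
    and "\<forall>h\<in>inodes G i I. card (hists G) < n + length h"
  shows "Vf n G i \<pi> \<rho> I = reach_value G i \<pi> \<rho> I"
  using assms
proof (induction n arbitrary: I)
  case 0
  then obtain h where "h \<in> inodes G i I"
    unfolding infosets_def inodes_def by blast
  with 0 show ?case
    using length_lt_card_hists unfolding inodes_def pnode_def by fastforce
next
  case (Suc n)
  have "Vf n G i \<pi> \<rho> J = reach_value G i \<pi> \<rho> J" if J: "J \<in> children G i I (\<rho> I)" for J
  proof (rule Suc.IH)
    show "J \<in> infosets G i"
      using J by (rule children_infosets)
    show "\<rho> \<in> plans_I G i J"
      using plans_I_children[OF Suc.prems(2) J] .
    show "\<forall>g\<in>inodes G i J. card (hists G) < n + length g"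
    proof
      fix g assume "g \<in> inodes G i J"
      then obtain h w where "h \<in> inodes G i I" "g = h @ \<rho> I # w"
        using children_inodes[OF J] by metis
      with Suc.prems(3) show "card (hists G) < n + length g"
        by fastforce
    qed
  qed
  then show ?case
    using reach_value_split[OF Suc.prems(2)] by simp
qed

lemma V_eq_reach_value:
  assumes "I \<in> infosets G i" and "\<rho> \<in> plans_I G i I"
  shows "V G i \<pi> \<rho> I = reach_value G i \<pi> \<rho> I"
  unfolding V_def by (rule Vf_eq_reach_value[OF assms]) simp

end

section \<open>Deviation values of the empirical frequency\<close>

definition trigger_value ::
    "('p, 'a, 'i) efg \<Rightarrow> 'p \<Rightarrow> 'i \<Rightarrow> 'a \<Rightarrow> nat \<Rightarrow> (nat \<Rightarrow> 'p \<Rightarrow> 'i \<Rightarrow> 'a) \<Rightarrow> ('i \<Rightarrow> 'a) \<Rightarrow> real" where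
  "trigger_value G i I a T pis \<rho> =
     (\<Sum>t\<in>{1..T}. if pis t i \<in> plans_seq G i I a then reach_value G i (pis t) \<rho> I else 0) / real T"

context wf_game
begin

lemma sum_plans_z_dist_on:
  assumes "dist_on (plans_I G i I) \<mu>h"
  shows "(\<Sum>\<rho>\<in>plans_z G i z. \<mu>h \<rho>)
       = (\<Sum>\<rho>\<in>plans_I G i I. \<mu>h \<rho> * (if \<rho> \<in> plans_z G i z then 1 else 0))"
proof -
  have "(\<Sum>\<rho>\<in>plans_z G i z. \<mu>h \<rho>) = (\<Sum>\<rho>\<in>plans G i. if \<rho> \<in> plans_z G i z then \<mu>h \<rho> else 0)"
    unfolding plans_z_def using finite_plans by (simp add: sum.inter_filter)
  also have "\<dots> = (\<Sum>\<rho>\<in>plans_I G i I. if \<rho> \<in> plans_z G i z then \<mu>h \<rho> else 0)"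
    using assms finite_plans by (intro sum.mono_neutral_right) (auto simp: dist_on_def plans_I_def)
  finally show ?thesis
    by (simp add: if_distrib cong: if_cong)
qed

lemma sum_p_dev_eq:
  assumes pis: "\<forall>t\<in>{1..T}. pis t \<in> jplans G" and \<mu>h: "dist_on (plans_I G i I) \<mu>h"
  shows "(\<Sum>z\<in>below G i I. p_dev G i I a (mubar T pis) \<mu>h z * util G i z)
       = (\<Sum>\<rho>\<in>plans_I G i I. \<mu>h \<rho> * trigger_value G i I a T pis \<rho>)"
proof -
  define ps where "ps t \<longleftrightarrow> pis t i \<in> plans_seq G i I a" for t
  define g where "g t z \<rho> = (if ps t \<and> others_reach G i (pis t) z \<and> \<rho> \<in> plans_z G i z
                             then pc G z * util G i z else 0)" for t z \<rho>
  have pointwise: "p_dev G i I a (mubar T pis) \<mu>h z * util G i z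
      = (\<Sum>\<rho>\<in>plans_I G i I. \<mu>h \<rho> * (\<Sum>t\<in>{1..T}. g t z \<rho>)) / real T" for z
  proof -
    have freq: "(\<Sum>\<pi>\<in>{\<pi> \<in> jplans G. \<pi> i \<in> plans_seq G i I a \<and> others_reach G i \<pi> z}. mubar T pis \<pi>)
        = (\<Sum>t\<in>{1..T}. if ps t \<and> others_reach G i (pis t) z then 1 else 0) / real T"
      unfolding ps_def by (rule sum_mubar[OF finite_jplans pis])
    have rounds: "(\<Sum>t\<in>{1..T}. g t z \<rho>) = (if \<rho> \<in> plans_z G i z then 1 else 0) *
        ((\<Sum>t\<in>{1..T}. if ps t \<and> others_reach G i (pis t) z then 1 else 0) * pc G z * util G i z)" for \<rho>
      unfolding g_def by (auto simp: sum_distrib_right intro!: sum.cong)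
    show ?thesis
      unfolding p_dev_def freq sum_plans_z_dist_on[OF \<mu>h] rounds
      by (simp add: sum_distrib_right sum_distrib_left sum_divide_distrib mult_ac) (rule sum.swap)
  qed
  have "(\<Sum>z\<in>below G i I. p_dev G i I a (mubar T pis) \<mu>h z * util G i z)
      = (\<Sum>\<rho>\<in>plans_I G i I. \<Sum>z\<in>below G i I. \<mu>h \<rho> * (\<Sum>t\<in>{1..T}. g t z \<rho>) / real T)"
    unfolding pointwise sum_divide_distrib by (rule sum.swap)
  also have "\<dots> = (\<Sum>\<rho>\<in>plans_I G i I. \<mu>h \<rho> * ((\<Sum>t\<in>{1..T}. \<Sum>z\<in>below G i I. g t z \<rho>) / real T))"
    by (simp add: sum_distrib_left sum_divide_distrib) (rule sum.cong[OF refl], rule sum.swap)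
  also have "\<dots> = (\<Sum>\<rho>\<in>plans_I G i I. \<mu>h \<rho> * trigger_value G i I a T pis \<rho>)"
  proof -
    have "(\<Sum>z\<in>below G i I. g t z \<rho>) = (if ps t then reach_value G i (pis t) \<rho> I else 0)" for t \<rho>
      unfolding g_def reach_value_def by auto
    then show ?thesis
      unfolding trigger_value_def ps_def by simp
  qed
  finally show ?thesis .
qed

lemma sum_below_act_reached:
  assumes "\<pi> \<in> jplans G" and "i \<in> players G"
  shows "(\<Sum>z\<in>below_act G i I a. if \<pi> \<in> jplans_z G z then pc G z * util G i z else 0)
       = (if \<pi> i \<in> plans_seq G i I a then reach_value G i \<pi> (\<pi> i) I else 0)"
proof (cases "\<pi> i \<in> plans_seq G i I a")
  case True
  have reached: "\<pi> \<in> jplans_z G z \<longleftrightarrow> others_reach G i \<pi> z \<and> \<pi> i \<in> plans_z G i z" for z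
    using assms unfolding jplans_z_def others_reach_def by auto
  from True have "\<pi> i I = a"
    unfolding plans_seq_def by blast
  then have "z \<in> below_act G i I a" if "\<pi> i \<in> plans_z G i z" and "z \<in> below G i I" for z
    using plans_z_below_act[OF that] by simp
  moreover have "below_act G i I a \<subseteq> below G i I"
    unfolding below_act_def below_def by blast
  ultimately have "reach_value G i \<pi> (\<pi> i) I = (\<Sum>z\<in>below_act G i I a.
      if others_reach G i \<pi> z \<and> \<pi> i \<in> plans_z G i z then pc G z * util G i z else 0)"
    unfolding reach_value_def by (intro sum.mono_neutral_right finite_below) auto
  with True show ?thesis
    unfolding reached by simp
next
  case False
  have "\<pi> \<notin> jplans_z G z" if "z \<in> below_act G i I a" for z
    using False plans_z_plans_seq[OF _ that] assms(2) unfolding jplans_z_def by blast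
  with False show ?thesis
    by simp
qed

lemma sum_q_eq:
  assumes pis: "\<forall>t\<in>{1..T}. pis t \<in> jplans G" and "i \<in> players G"
  shows "(\<Sum>z\<in>below_act G i I a. q G (mubar T pis) z * util G i z)
       = (\<Sum>t\<in>{1..T}. if pis t i \<in> plans_seq G i I a
                       then reach_value G i (pis t) (pis t i) I else 0) / real T"
proof -
  have q: "q G (mubar T pis) z = (\<Sum>t\<in>{1..T}. if pis t \<in> jplans_z G z then 1 else 0) / real T * pc G z"
    for z
  proof -
    have "(\<Sum>\<pi>\<in>jplans_z G z. mubar T pis \<pi>)
        = (\<Sum>t\<in>{1..T}. if \<forall>j\<in>players G. pis t j \<in> plans_z G j z then 1 else 0) / real T"
      unfolding jplans_z_def by (rule sum_mubar[OF finite_jplans pis])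
    also have "\<dots> = (\<Sum>t\<in>{1..T}. if pis t \<in> jplans_z G z then 1 else 0) / real T"
      using pis unfolding jplans_z_def by (intro arg_cong2[where f = "(/)"] sum.cong) auto
    finally show ?thesis
      unfolding q_def by simp
  qed
  have pointwise: "q G (mubar T pis) z * util G i z
      = (\<Sum>t\<in>{1..T}. if pis t \<in> jplans_z G z then pc G z * util G i z else 0) / real T" for z
  proof -
    have "(\<Sum>t\<in>{1..T}. if pis t \<in> jplans_z G z then 1 else 0) * (pc G z * util G i z)
        = (\<Sum>t\<in>{1..T}. if pis t \<in> jplans_z G z then pc G z * util G i z else 0)"
      by (auto simp: sum_distrib_right intro!: sum.cong)
    then show ?thesis
      unfolding q by (simp add: mult.assoc)
  qed
  have "(\<Sum>z\<in>below_act G i I a. q G (mubar T pis) z * util G i z)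
      = (\<Sum>t\<in>{1..T}. \<Sum>z\<in>below_act G i I a.
           if pis t \<in> jplans_z G z then pc G z * util G i z else 0) / real T"
    unfolding pointwise sum_divide_distrib[symmetric] by (subst sum.swap) (rule refl)
  also have "\<dots> = (\<Sum>t\<in>{1..T}. if pis t i \<in> plans_seq G i I a
                       then reach_value G i (pis t) (pis t i) I else 0) / real T"
    using pis assms(2) by (simp add: sum_below_act_reached)
  finally show ?thesis .
qed

lemma trigger_value_eq:
  assumes "T > 0" and pis: "\<forall>t\<in>{1..T}. pis t \<in> jplans G"
    and "i \<in> players G" and I: "I \<in> infosets G i" and "\<rho> \<in> plans_I G i I"
  shows "trigger_value G i I a T pis \<rho>
       = (\<Sum>t\<in>{1..T}. if pis t i \<in> plans_seq G i I a
                       then V G i (pis t) \<rho> I - V G i (pis t) (pis t i) I else 0) / real T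
         + (\<Sum>z\<in>below_act G i I a. q G (mubar T pis) z * util G i z)"
proof -
  have "V G i (pis t) \<rho> I - V G i (pis t) (pis t i) I
      = reach_value G i (pis t) \<rho> I - reach_value G i (pis t) (pis t i) I"
    if "pis t i \<in> plans_seq G i I a" for t
    using that assms(5) V_eq_reach_value[OF I] unfolding plans_seq_def by simp
  then show ?thesis
    unfolding sum_q_eq[OF pis assms(3)] trigger_value_def
    by (simp add: add_divide_distrib[symmetric] sum.distrib[symmetric] if_distrib cong: if_cong)
qed

lemma Max_trigger_value:
  assumes "T > 0" and pis: "\<forall>t\<in>{1..T}. pis t \<in> jplans G"
    and "i \<in> players G" and "I \<in> infosets G i"
  shows "Max (trigger_value G i I a T pis ` plans_I G i I)
       = trig_regret G i I a T pis / real T + (\<Sum>z\<in>below_act G i I a. q G (mubar T pis) z * util G i z)"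
proof -
  let ?Q = "\<Sum>z\<in>below_act G i I a. q G (mubar T pis) z * util G i z"
  let ?R = "\<lambda>\<rho>. \<Sum>t\<in>{1..T}. if pis t i \<in> plans_seq G i I a
                             then V G i (pis t) \<rho> I - V G i (pis t) (pis t i) I else 0"
  have "trigger_value G i I a T pis ` plans_I G i I = (\<lambda>x. x / real T + ?Q) ` ?R ` plans_I G i I"
    using trigger_value_eq[OF assms] by (auto simp: image_image intro!: image_cong)
  then have "Max (trigger_value G i I a T pis ` plans_I G i I)
      = Max ((\<lambda>x. x / real T + ?Q) ` ?R ` plans_I G i I)"
    by (rule arg_cong)
  also have "\<dots> = Max (?R ` plans_I G i I) / real T + ?Q"
  proof (rule mono_Max_commute[symmetric])
    show "mono (\<lambda>x. x / real T + ?Q)"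
      using assms(1) by (intro monoI) (simp add: divide_right_mono)
  qed (use finite_plans_I plans_I_nonempty[OF assms(4)] in auto)
  also have "\<dots> = trig_regret G i I a T pis / real T + ?Q"
    unfolding trig_regret_def ..
  finally show ?thesis .
qed

lemma dev_eq_trig_regret:
  assumes "T > 0" and pis: "\<forall>t\<in>{1..T}. pis t \<in> jplans G" and "(i, I, a) \<in> seqset G"
  shows "dev G (mubar T pis) i I a = trig_regret G i I a T pis / real T"
proof -
  have "i \<in> players G" and I: "I \<in> infosets G i"
    using assms(3) unfolding seqset_def by auto
  have "{\<Sum>z\<in>below G i I. p_dev G i I a (mubar T pis) \<mu>h z * util G i z | \<mu>h. dist_on (plans_I G i I) \<mu>h}
      = {\<Sum>\<rho>\<in>plans_I G i I. \<mu>h \<rho> * trigger_value G i I a T pis \<rho> | \<mu>h. dist_on (plans_I G i I) \<mu>h}"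
    unfolding setcompr_eq_image using sum_p_dev_eq[OF pis] by (intro image_cong) auto
  then have "dev G (mubar T pis) i I a
      = Sup {\<Sum>\<rho>\<in>plans_I G i I. \<mu>h \<rho> * trigger_value G i I a T pis \<rho> | \<mu>h. dist_on (plans_I G i I) \<mu>h}
        - (\<Sum>z\<in>below_act G i I a. q G (mubar T pis) z * util G i z)"
    unfolding dev_def by simp
  also have "\<dots> = Max (trigger_value G i I a T pis ` plans_I G i I)
      - (\<Sum>z\<in>below_act G i I a. q G (mubar T pis) z * util G i z)"
    using Sup_dist_on_sum[OF finite_plans_I plans_I_nonempty[OF I]] by simp
  also have "\<dots> = trig_regret G i I a T pis / real T"
    using Max_trigger_value[OF assms(1,2) \<open>i \<in> players G\<close> I] by simp
  finally show ?thesis .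
qed

lemma sum_p_dev_le:
  assumes "T > 0" and pis: "\<forall>t\<in>{1..T}. pis t \<in> jplans G" and "(i, I, a) \<in> seqset G"
    and \<mu>h: "dist_on (plans_I G i I) \<mu>h"
  shows "(\<Sum>z\<in>below G i I. p_dev G i I a (mubar T pis) \<mu>h z * util G i z)
       \<le> (\<Sum>z\<in>below_act G i I a. q G (mubar T pis) z * util G i z) + trig_regret G i I a T pis / real T"
proof -
  have "i \<in> players G" and "I \<in> infosets G i"
    using assms(3) unfolding seqset_def by auto
  have "(\<Sum>z\<in>below G i I. p_dev G i I a (mubar T pis) \<mu>h z * util G i z)
      = (\<Sum>\<rho>\<in>plans_I G i I. \<mu>h \<rho> * trigger_value G i I a T pis \<rho>)"
    by (rule sum_p_dev_eq[OF pis \<mu>h])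
  also have "\<dots> \<le> Max (trigger_value G i I a T pis ` plans_I G i I)"
    by (rule dist_on_sum_le_Max[OF finite_plans_I \<mu>h])
  also have "\<dots> = trig_regret G i I a T pis / real T
      + (\<Sum>z\<in>below_act G i I a. q G (mubar T pis) z * util G i z)"
    by (rule Max_trigger_value) fact+
  finally show ?thesis
    by simp
qed

end

theorem theorem1:
  fixes G :: "('p, 'a, 'i) efg" and pis :: "nat \<Rightarrow> 'p \<Rightarrow> 'i \<Rightarrow> 'a" and T :: nat
  assumes "wf_efg G"
    and "T > 0"
    and "\<forall>t\<in>{1..T}. pis t \<in> jplans G"
  shows "delta G (mubar T pis)
           = Max ((\<lambda>(i, I, a). trig_regret G i I a T pis / real T) ` seqset G)
       \<and> efce_eps G (mubar T pis)
           (Max ((\<lambda>(i, I, a). trig_regret G i I a T pis / real T) ` seqset G))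
       \<and> (\<forall>(i, I, a)\<in>seqset G. \<forall>\<mu>h. dist_on (plans_I G i I) \<mu>h \<longrightarrow>
            (\<Sum>z\<in>below_act G i I a. q G (mubar T pis) z * util G i z)
            \<ge> (\<Sum>z\<in>below G i I. p_dev G i I a (mubar T pis) \<mu>h z * util G i z)
              - Max ((\<lambda>(i, I, a). trig_regret G i I a T pis / real T) ` seqset G))"
proof -
  interpret wf_game G
    using assms(1) by (rule wf_game.intro)
  let ?r = "\<lambda>(i, I, a). trig_regret G i I a T pis / real T"
  have "(\<lambda>(i, I, a). dev G (mubar T pis) i I a) ` seqset G = ?r ` seqset G"
    using dev_eq_trig_regret[OF assms(2,3)] by (intro image_cong) auto
  then have delta: "delta G (mubar T pis) = Max (?r ` seqset G)"
    unfolding delta_def by (rule arg_cong)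
  have bound: "(\<Sum>z\<in>below G i I. p_dev G i I a (mubar T pis) \<mu>h z * util G i z) - Max (?r ` seqset G)
      \<le> (\<Sum>z\<in>below_act G i I a. q G (mubar T pis) z * util G i z)"
    if tr: "(i, I, a) \<in> seqset G" and \<mu>h: "dist_on (plans_I G i I) \<mu>h" for i I a \<mu>h
  proof -
    have "?r (i, I, a) \<le> Max (?r ` seqset G)"
      by (intro Max_ge finite_imageI imageI finite_seqset tr)
    with sum_p_dev_le[OF assms(2,3) tr \<mu>h] show ?thesis
      by simp
  qed
  show ?thesis
    unfolding efce_eps_def delta by (intro conjI refl order_refl) (clarify, erule (1) bound)
qed

end
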